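(* Let $M\ge1$, $\alpha\in(0,1)$, $R_{th}>0$ and $\varepsilon=2^{2R_{th}/(1-\alpha)}-1$. For link types $j\in\{SR,RD\}$ let IQI parameters $\xi_{t_j},\xi_{r_j}>0$, $\phi_{t_j},\phi_{r_j}\in\mathbb{R}$ be given (the same for all relays), with $\mu_{t_j}=\tfrac12(1+\xi_{t_j}e^{i\phi_{t_j}})$, $v_{t_j}=\tfrac12(1-\xi_{t_j}e^{-i\phi_{t_j}})$, $\mu_{r_j}=\tfrac12(1+\xi_{r_j}e^{-i\phi_{r_j}})$, $v_{r_j}=\tfrac12(1-\xi_{r_j}e^{i\phi_{r_j}})$, $p_j=|\mu_{t_j}\mu_{r_j}+v_{t_j}^*v_{r_j}|^2$, $q_j=|\mu_{r_j}v_{t_j}+\mu_{t_j}^*v_{r_j}|^2$, and assume $p_j-\varepsilon q_j>0$. Let $X_{SR_1},\dots,X_{SR_M},X_{R_1D},\dots,X_{R_MD}$ be independent, with $X_{SR_m}$ exponential of rate $\lambda_{SR}>0$ and $X_{R_mD}$ exponential of rate $\lambda_{RD}>0$ for all $m$. Let the estimation-error variances be $\sigma^2_{e_{SR}}=\sigma^2_{e_{RD}}=t>0$. For each $m$ define $$C^\infty_{SR_m}=\frac{1-\alpha}{2}\log_2\!\Big(1+\frac{X_{SR_m}p_{SR}}{\sigma^2_{e_{SR}}p_{SR}+X_{SR_m}q_{SR}+\sigma^2_{e_{SR}}q_{SR}}\Big),\quad C^\infty_{R_mD}=\frac{1-\alpha}{2}\log_2\!\Big(1+\frac{X_{R_mD}p_{RD}}{\sigma^2_{e_{RD}}p_{RD}+X_{R_mD}q_{RD}+\sigma^2_{e_{RD}}q_{RD}}\Big),$$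 and let $a=\arg\max_{1\le m\le M}C^\infty_{SR_m}$. Then $$\Pr\{\min(C^\infty_{SR_a},C^\infty_{R_aD})<R_{th}\}=1-\Big(1-\big(1-e^{-\lambda_{SR}H_3}\big)^M\Big)e^{-\lambda_{RD}H_4},$$ where $H_3=\dfrac{\varepsilon\sigma^2_{e_{SR}}(p_{SR}+q_{SR})}{p_{SR}-\varepsilon q_{SR}}$ and $H_4=\dfrac{\varepsilon\sigma^2_{e_{RD}}(p_{RD}+q_{RD})}{p_{RD}-\varepsilon q_{RD}}$.
   Context: Decode-and-forward relaying with $M$ relays and suboptimal relay selection: the relay $R_a$ is chosen to maximize the first-hop ($S\to R_m$) capacity. $X_j=|\hat h_j|^2$ are estimated Rayleigh channel gains, $\sigma^2_{e_j}$ channel-estimation-error variances, and $p_j,q_j$ are the I/Q-imbalance gain coefficients. The left-hand side is the asymptotic (high-SNR) outage probability; $z^*$ is complex conjugate, $i$ the imaginary unit. *)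

theory Defs
  imports "HOL-Probability.Probability"
begin

definition mu_t :: "real \<Rightarrow> real \<Rightarrow> complex" where
  "mu_t xi phi = (1 + complex_of_real xi * cis phi) / 2"
definition v_t :: "real \<Rightarrow> real \<Rightarrow> complex" where
  "v_t xi phi = (1 - complex_of_real xi * cis (- phi)) / 2"
definition mu_r :: "real \<Rightarrow> real \<Rightarrow> complex" where
  "mu_r xi phi = (1 + complex_of_real xi * cis (- phi)) / 2"
definition v_r :: "real \<Rightarrow> real \<Rightarrow> complex" where
  "v_r xi phi = (1 - complex_of_real xi * cis phi) / 2"

definition p_coef :: "real \<Rightarrow> real \<Rightarrow> real \<Rightarrow> real \<Rightarrow> real" where
  "p_coef xt pt xr pr =
     (cmod (mu_t xt pt * mu_r xr pr + cnj (v_t xt pt) * v_r xr pr))\<^sup>2"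
definition q_coef :: "real \<Rightarrow> real \<Rightarrow> real \<Rightarrow> real \<Rightarrow> real" where
  "q_coef xt pt xr pr =
     (cmod (mu_r xr pr * v_t xt pt + cnj (mu_t xt pt) * v_r xr pr))\<^sup>2"

definition cap_inf :: "real \<Rightarrow> real \<Rightarrow> real \<Rightarrow> real \<Rightarrow> real \<Rightarrow> real" where
  "cap_inf alpha p q s x = (1 - alpha) / 2 * log 2 (1 + x * p / (s * p + x * q + s * q))"

definition sel :: "(nat \<Rightarrow> 'w \<Rightarrow> real) \<Rightarrow> nat \<Rightarrow> 'w \<Rightarrow> nat" where
  "sel C M w = (LEAST m. m \<in> {1..M} \<and> (\<forall>k\<in>{1..M}. C k w \<le> C m w))"

end

theory Submission
  imports Defs
begin

text \<open>
  Each hop capacity is increasing in the estimated gain, so a hop is in outage exactly when its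
  gain lies below the threshold \<open>H3\<close> resp. \<open>H4\<close>. The selected relay maximises the first-hop
  capacity, so its first hop fails iff all first hops fail, which has probability
  \<open>(1 - exp (- lSR * H3)) ^ M\<close>. The selected index \<open>a\<close> is a function of the first-hop gains
  alone; splitting over its value \<open>m\<close>, the event that some first hop survives and \<open>a = m\<close> is independent of
  the second-hop gain of relay \<open>m\<close>, which survives with probability \<open>exp (- lRD * H4)\<close>
  whatever \<open>m\<close> is. Hence the no-outage probability factorises.
\<close>

lemma cap_inf_less_iff:
  fixes alpha Rth eps p q t x :: real
  assumes "alpha < 1" "Rth > 0" "eps = 2 powr (2 * Rth / (1 - alpha)) - 1"
    and "q \<ge> 0" "p - eps * q > 0" "t > 0" "x \<ge> 0"
  shows "cap_inf alpha p q t x < Rth \<longleftrightarrow> x < eps * t * (p + q) / (p - eps * q)"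
proof -
  have "eps > 0"
    using assms(1-3) powr_less_mono[of 0 "2 * Rth / (1 - alpha)" 2] by simp
  then have "eps * q \<ge> 0"
    using assms(4) by simp
  then have "p > 0"
    using assms(5) by linarith
  define D where "D = t * p + x * q + t * q"
  have D: "D > 0"
    unfolding D_def using assms \<open>p > 0\<close> by (simp add: add_pos_nonneg)
  have "cap_inf alpha p q t x < Rth \<longleftrightarrow> log 2 (1 + x * p / D) < 2 * Rth / (1 - alpha)"
    unfolding cap_inf_def D_def using assms by (auto simp: field_simps)
  also have "\<dots> \<longleftrightarrow> 1 + x * p / D < 2 powr (2 * Rth / (1 - alpha))"
    using D \<open>p > 0\<close> assms(7) by (intro log_less_iff) (auto intro: add_pos_nonneg)
  also have "\<dots> \<longleftrightarrow> x * p / D < eps"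
    using assms(3) by linarith
  also have "\<dots> \<longleftrightarrow> x * p < eps * D"
    using D by (simp add: pos_divide_less_eq)
  also have "\<dots> \<longleftrightarrow> x * (p - eps * q) < eps * t * (p + q)"
    unfolding D_def by (simp add: algebra_simps)
  also have "\<dots> \<longleftrightarrow> x < eps * t * (p + q) / (p - eps * q)"
    using assms(5) by (simp add: pos_less_divide_eq)
  finally show ?thesis .
qed

lemma borel_measurable_cap_inf[measurable]: "cap_inf alpha p q t \<in> borel_measurable borel"
  unfolding cap_inf_def[abs_def] by measurable

lemma
  assumes "n \<ge> 1"
  shows sel_in_range: "sel C n w \<in> {1..n}"
    and sel_maximal: "\<And>k. k \<in> {1..n} \<Longrightarrow> C k w \<le> C (sel C n w) w"
proof -
  let ?V = "(\<lambda>k. C k w) ` {1..n}"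
  have V: "finite ?V" "?V \<noteq> {}"
    using assms by auto
  obtain m where m: "m \<in> {1..n}" "C m w = Max ?V"
    using Max_in[OF V] by (metis imageE)
  then have "\<forall>k\<in>{1..n}. C k w \<le> C m w"
    using V(1) by simp
  with m(1) have "sel C n w \<in> {1..n} \<and> (\<forall>k\<in>{1..n}. C k w \<le> C (sel C n w) w)"
    unfolding sel_def by (rule LeastI[where k = m, OF conjI])
  then show "sel C n w \<in> {1..n}" "\<And>k. k \<in> {1..n} \<Longrightarrow> C k w \<le> C (sel C n w) w"
    by simp_all
qed

lemma sel_less_iff:
  assumes "n \<ge> 1"
  shows "C (sel C n w) w < r \<longleftrightarrow> (\<forall>k\<in>{1..n}. C k w < r)"
  using sel_in_range[OF assms] sel_maximal[OF assms] by (meson le_less_trans)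

lemma sel_cong:
  assumes "\<And>k. k \<in> {1..n} \<Longrightarrow> C k w = D k v"
  shows "sel C n w = sel D n v"
proof -
  have "(\<lambda>m. m \<in> {1..n} \<and> (\<forall>k\<in>{1..n}. C k w \<le> C m w))
      = (\<lambda>m. m \<in> {1..n} \<and> (\<forall>k\<in>{1..n}. D k v \<le> D m v))"
    using assms by auto
  then show ?thesis
    unfolding sel_def by simp
qed

lemma min_sel_less_iff:
  fixes C D :: "nat \<Rightarrow> 'w \<Rightarrow> real" and X Y :: "nat \<Rightarrow> 'w \<Rightarrow> 'b::linorder"
  assumes "n \<ge> 1"
    and "\<And>k. k \<in> {1..n} \<Longrightarrow> C k w < r \<longleftrightarrow> X k w < h"
    and "\<And>k. k \<in> {1..n} \<Longrightarrow> D k w < r \<longleftrightarrow> Y k w < h'"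
  shows "min (C (sel C n w) w) (D (sel C n w) w) < r
           \<longleftrightarrow> \<not> ((\<exists>k\<in>{1..n}. h \<le> X k w) \<and> h' \<le> Y (sel C n w) w)"
proof -
  have "C (sel C n w) w < r \<longleftrightarrow> (\<forall>k\<in>{1..n}. X k w < h)"
    using sel_less_iff[OF assms(1), of C w r] assms(2) by blast
  moreover have "D (sel C n w) w < r \<longleftrightarrow> Y (sel C n w) w < h'"
    using sel_in_range[OF assms(1)] by (rule assms(3))
  ultimately show ?thesis
    by (auto simp: min_less_iff_disj not_le)
qed

lemma measurable_sel[measurable]:
  assumes [measurable]: "\<And>k. k \<in> {1..n} \<Longrightarrow> C k \<in> borel_measurable N"
  shows "sel C n \<in> N \<rightarrow>\<^sub>M count_space UNIV"
  unfolding sel_def[abs_def] by measurable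

lemma measurable_sel_apply:
  assumes "n \<ge> 1"
    and [measurable]: "\<And>k. k \<in> {1..n} \<Longrightarrow> C k \<in> borel_measurable N"
    and Y: "\<And>k. k \<in> {1..n} \<Longrightarrow> Y k \<in> borel_measurable N"
  shows "(\<lambda>w. Y (sel C n w) w) \<in> borel_measurable N"
proof -
  have "sel C n \<in> N \<rightarrow>\<^sub>M count_space UNIV"
    by measurable
  have sel: "sel C n \<in> N \<rightarrow>\<^sub>M count_space {1..n}"
    by (rule measurable_count_space_extend[OF subset_UNIV _ \<open>sel C n \<in> _\<close>])
      (intro funcsetI sel_in_range assms(1))
  show ?thesis
    by (rule measurable_compose_countable'[where f = Y and I = "{1..n}", OF Y sel]) simp_all
qed

lemma (in prob_space) exponential_distributedD_ge:
  assumes D: "distributed M lborel X (exponential_density l)" and "l > 0" "a \<ge> 0"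
  shows "\<P>(\<omega> in M. a \<le> X \<omega>) = exp (- a * l)"
proof -
  have [measurable]: "X \<in> borel_measurable M"
    using distributed_measurable[OF D] by simp
  have "AE \<omega> in M. X \<omega> \<noteq> a"
    by (subst distributed_AE2[OF D]) (auto intro: AE_mp[OF AE_lborel_singleton[of a]])
  then have "\<P>(\<omega> in M. a \<le> X \<omega>) = \<P>(\<omega> in M. a < X \<omega>)"
    by (intro prob_eq_AE) auto
  then show ?thesis
    using exponential_distributedD_gt[OF D assms(3,2)] by simp
qed

lemma (in prob_space) exponential_distributed_AE_nonneg:
  assumes "distributed M lborel X (exponential_density l)"
  shows "AE \<omega> in M. 0 \<le> X \<omega>"
  by (subst distributed_AE2[OF assms]) (auto simp: exponential_density_def)

lemma (in prob_space) prob_exists_exponential_ge: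
  assumes indep: "indep_vars (\<lambda>_. borel) X I" and I: "finite I" "I \<noteq> {}"
    and D: "\<And>i. i \<in> I \<Longrightarrow> distributed M lborel (X i) (exponential_density l)"
    and "l > 0" "h \<ge> 0"
  shows "\<P>(\<omega> in M. \<exists>i\<in>I. h \<le> X i \<omega>) = 1 - (1 - exp (- h * l)) ^ card I"
proof -
  have [measurable]: "X i \<in> borel_measurable M" if "i \<in> I" for i
    using distributed_measurable[OF D[OF that]] by simp
  have below: "prob (X i -` {..<h} \<inter> space M) = 1 - exp (- h * l)" if "i \<in> I" for i
    using prob_neg[of "\<lambda>\<omega>. h \<le> X i \<omega>"] exponential_distributedD_ge[OF D[OF that] \<open>l > 0\<close> \<open>h \<ge> 0\<close>]
      that
    by (simp add: vimage_def Int_def not_le conj_commute)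
  have "\<P>(\<omega> in M. \<not> (\<exists>i\<in>I. h \<le> X i \<omega>)) = prob (\<Inter>i\<in>I. X i -` {..<h} \<inter> space M)"
    using I by (auto intro!: arg_cong[where f = prob])
  also have "\<dots> = (\<Prod>i\<in>I. prob (X i -` {..<h} \<inter> space M))"
    using indep I by (intro indep_varsD) auto
  also have "\<dots> = (1 - exp (- h * l)) ^ card I"
    using below by simp
  finally show ?thesis
    using prob_neg[of "\<lambda>\<omega>. \<exists>i\<in>I. h \<le> X i \<omega>"] I by simp
qed

lemma (in prob_space) indep_vars_prob_blocks:
  assumes "indep_vars M' X I" "J \<subseteq> I" "K \<subseteq> I" "J \<inter> K = {}"
    and "Measurable.pred (Pi\<^sub>M J M') f" "Measurable.pred (Pi\<^sub>M K M') g"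
  shows "\<P>(\<omega> in M. f (\<lambda>i\<in>J. X i \<omega>) \<and> g (\<lambda>i\<in>K. X i \<omega>))
           = \<P>(\<omega> in M. f (\<lambda>i\<in>J. X i \<omega>)) * \<P>(\<omega> in M. g (\<lambda>i\<in>K. X i \<omega>))"
proof -
  have "indep_var (count_space UNIV) (f \<circ> (\<lambda>\<omega>. \<lambda>i\<in>J. X i \<omega>))
      (count_space UNIV) (g \<circ> (\<lambda>\<omega>. \<lambda>i\<in>K. X i \<omega>))"
    using indep_var_compose[OF indep_var_restrict[OF assms(1,4,2,3)] assms(5,6)] .
  from prob_indep_random_variable[OF this, of "{True}" "{True}"] show ?thesis
    by simp
qed

lemma (in prob_space) prob_selected_indep:
  fixes XS XR :: "nat \<Rightarrow> 'a \<Rightarrow> real" and c :: "real \<Rightarrow> real"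
  assumes indep: "indep_vars (\<lambda>_. borel) (case_sum XS XR) ({1..n} <+> {1..n})"
    and "n \<ge> 1" and [measurable]: "c \<in> borel_measurable borel" "S \<in> sets borel" "B \<in> sets borel"
    and tail: "\<And>m. m \<in> {1..n} \<Longrightarrow> \<P>(\<omega> in M. XR m \<omega> \<in> B) = \<rho>"
  shows "\<P>(\<omega> in M. (\<exists>k\<in>{1..n}. XS k \<omega> \<in> S) \<and> XR (sel (\<lambda>k \<omega>. c (XS k \<omega>)) n \<omega>) \<omega> \<in> B)
           = \<P>(\<omega> in M. \<exists>k\<in>{1..n}. XS k \<omega> \<in> S) * \<rho>"
proof -
  let ?a = "sel (\<lambda>k \<omega>. c (XS k \<omega>)) n"
  let ?G = "\<lambda>\<omega>. \<exists>k\<in>{1..n}. XS k \<omega> \<in> S"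
  have [measurable]: "XS k \<in> borel_measurable M" "XR k \<in> borel_measurable M" if "k \<in> {1..n}" for k
    using indep that unfolding indep_vars_def by force+
  have a: "?a \<omega> \<in> {1..n}" for \<omega>
    using \<open>n \<ge> 1\<close> by (rule sel_in_range)
  have by_selection: "\<P>(\<omega> in M. Q \<omega>) = (\<Sum>m\<in>{1..n}. \<P>(\<omega> in M. Q \<omega> \<and> ?a \<omega> = m))"
    if [measurable]: "Measurable.pred M Q" for Q
    by (rule prob_sum) (use a in auto)
  have block: "\<P>(\<omega> in M. ?G \<omega> \<and> ?a \<omega> = m \<and> XR m \<omega> \<in> B)
      = \<P>(\<omega> in M. ?G \<omega> \<and> ?a \<omega> = m) * \<rho>"
    if m: "m \<in> {1..n}" for m
  proof -
    define f where "f v \<longleftrightarrow> (\<exists>k\<in>{1..n}. v (Inl k) \<in> S) \<and> sel (\<lambda>k v. c (v (Inl k))) n v = m"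
      for v :: "nat + nat \<Rightarrow> real"
    have f_measurable: "Measurable.pred (Pi\<^sub>M (Inl ` {1..n}) (\<lambda>_. borel)) f"
      unfolding f_def by measurable
    have g_measurable: "Measurable.pred (Pi\<^sub>M {Inr m} (\<lambda>_. borel)) (\<lambda>v. v (Inr m) \<in> B)"
      by measurable
    have f_restrict: "f (\<lambda>i\<in>Inl ` {1..n}. case_sum XS XR i \<omega>) \<longleftrightarrow> ?G \<omega> \<and> ?a \<omega> = m" for \<omega>
    proof -
      have "sel (\<lambda>k v. c (v (Inl k))) n (\<lambda>i\<in>Inl ` {1..n}. case_sum XS XR i \<omega>) = ?a \<omega>"
        by (rule sel_cong) simp
      then show ?thesis
        by (simp add: f_def)
    qed
    \<comment> \<open>\<open>G \<and> a = m\<close> is an event of the first-hop block, hence independent of \<open>XR m\<close>\<close>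
    have "\<P>(\<omega> in M. f (\<lambda>i\<in>Inl ` {1..n}. case_sum XS XR i \<omega>)
                  \<and> (\<lambda>i\<in>{Inr m}. case_sum XS XR i \<omega>) (Inr m) \<in> B)
        = \<P>(\<omega> in M. f (\<lambda>i\<in>Inl ` {1..n}. case_sum XS XR i \<omega>))
          * \<P>(\<omega> in M. (\<lambda>i\<in>{Inr m}. case_sum XS XR i \<omega>) (Inr m) \<in> B)"
      by (rule indep_vars_prob_blocks[OF indep _ _ _ f_measurable g_measurable]) (use m in auto)
    then show ?thesis
      unfolding f_restrict by (simp add: tail[OF m])
  qed
  have "\<P>(\<omega> in M. ?G \<omega> \<and> XR (?a \<omega>) \<omega> \<in> B)
      = \<P>(\<omega> in M. \<exists>m\<in>{1..n}. ?G \<omega> \<and> ?a \<omega> = m \<and> XR m \<omega> \<in> B)"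
    using a by (metis (no_types, lifting))
  also have "\<dots> = (\<Sum>m\<in>{1..n}. \<P>(\<omega> in M. ?G \<omega> \<and> ?a \<omega> = m \<and> XR m \<omega> \<in> B))"
    by (subst by_selection) (measurable, auto intro!: sum.cong arg_cong[where f = prob])
  also have "\<dots> = (\<Sum>m\<in>{1..n}. \<P>(\<omega> in M. ?G \<omega> \<and> ?a \<omega> = m)) * \<rho>"
    unfolding sum_distrib_right by (rule sum.cong[OF refl block])
  also have "\<dots> = \<P>(\<omega> in M. ?G \<omega>) * \<rho>"
    by (subst by_selection) measurable
  finally show ?thesis .
qed

lemma (in prob_space) selection_outage_prob:
  fixes XS XR :: "nat \<Rightarrow> 'a \<Rightarrow> real" and cS cR :: "real \<Rightarrow> real"
  assumes indep: "indep_vars (\<lambda>_. borel) (case_sum XS XR) ({1..n} <+> {1..n})" and "n \<ge> 1"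
    and dS: "\<And>m. m \<in> {1..n} \<Longrightarrow> distributed M lborel (XS m) (exponential_density lS)"
    and dR: "\<And>m. m \<in> {1..n} \<Longrightarrow> distributed M lborel (XR m) (exponential_density lR)"
    and "lS > 0" "lR > 0" "hS \<ge> 0" "hR \<ge> 0"
    and [measurable]: "cS \<in> borel_measurable borel" "cR \<in> borel_measurable borel"
    and thrS: "\<And>x. x \<ge> 0 \<Longrightarrow> cS x < r \<longleftrightarrow> x < hS"
    and thrR: "\<And>x. x \<ge> 0 \<Longrightarrow> cR x < r \<longleftrightarrow> x < hR"
  shows "\<P>(\<omega> in M. min (cS (XS (sel (\<lambda>k \<omega>. cS (XS k \<omega>)) n \<omega>) \<omega>))
                        (cR (XR (sel (\<lambda>k \<omega>. cS (XS k \<omega>)) n \<omega>) \<omega>)) < r)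
           = 1 - (1 - (1 - exp (- lS * hS)) ^ n) * exp (- lR * hR)"
proof -
  let ?a = "sel (\<lambda>k \<omega>. cS (XS k \<omega>)) n"
  let ?G = "\<lambda>\<omega>. \<exists>k\<in>{1..n}. hS \<le> XS k \<omega>"
  have [measurable]: "XS k \<in> borel_measurable M" "XR k \<in> borel_measurable M" if "k \<in> {1..n}" for k
    using distributed_measurable[OF dS[OF that]] distributed_measurable[OF dR[OF that]] by simp_all
  have [measurable]: "(\<lambda>\<omega>. XS (?a \<omega>) \<omega>) \<in> borel_measurable M"
    "(\<lambda>\<omega>. XR (?a \<omega>) \<omega>) \<in> borel_measurable M"
    by (rule measurable_sel_apply[OF \<open>n \<ge> 1\<close>]; measurable)+
  have "AE \<omega> in M. \<forall>k\<in>{1..n}. 0 \<le> XS k \<omega> \<and> 0 \<le> XR k \<omega>"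
    using exponential_distributed_AE_nonneg[OF dS] exponential_distributed_AE_nonneg[OF dR]
    by (intro AE_finite_allI) (auto intro: AE_conjI)
  then have "AE \<omega> in M. min (cS (XS (?a \<omega>) \<omega>)) (cR (XR (?a \<omega>) \<omega>)) < r
      \<longleftrightarrow> \<not> (?G \<omega> \<and> hR \<le> XR (?a \<omega>) \<omega>)"
    by eventually_elim (intro min_sel_less_iff \<open>n \<ge> 1\<close>, auto simp: thrS thrR)
  then have "\<P>(\<omega> in M. min (cS (XS (?a \<omega>) \<omega>)) (cR (XR (?a \<omega>) \<omega>)) < r)
      = \<P>(\<omega> in M. \<not> (?G \<omega> \<and> hR \<le> XR (?a \<omega>) \<omega>))"
    by (rule prob_eq_AE) measurable
  also have "\<dots> = 1 - \<P>(\<omega> in M. ?G \<omega> \<and> hR \<le> XR (?a \<omega>) \<omega>)"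
    by (rule prob_neg) measurable
  also have "\<dots> = 1 - \<P>(\<omega> in M. ?G \<omega>) * exp (- hR * lR)"
    using prob_selected_indep[OF indep \<open>n \<ge> 1\<close>, of cS "{hS..}" "{hR..}"]
      exponential_distributedD_ge[OF dR \<open>lR > 0\<close> \<open>hR \<ge> 0\<close>] by simp
  also have "\<P>(\<omega> in M. ?G \<omega>) = 1 - (1 - exp (- hS * lS)) ^ n"
  proof -
    have "\<P>(\<omega> in M. \<exists>i\<in>Inl ` {1..n}. hS \<le> case_sum XS XR i \<omega>)
        = 1 - (1 - exp (- hS * lS)) ^ card (Inl ` {1..n} :: (nat + nat) set)"
      using \<open>n \<ge> 1\<close> \<open>lS > 0\<close> \<open>hS \<ge> 0\<close> dS
      by (intro prob_exists_exponential_ge indep_vars_subset[OF indep]) auto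
    then show ?thesis
      by (simp add: card_image)
  qed
  finally show ?thesis
    by (simp add: mult.commute)
qed

theorem corollary3:
  fixes P :: "'w measure"
    and M :: nat and alpha Rth eps t lSR lRD :: real
    and xtSR ptSR xrSR prSR xtRD ptRD xrRD prRD :: real
    and XSR XRD :: "nat \<Rightarrow> 'w \<Rightarrow> real"
  assumes "prob_space P"
    and "M \<ge> 1" and "0 < alpha" and "alpha < 1" and "Rth > 0"
    and eps_def: "eps = 2 powr (2 * Rth / (1 - alpha)) - 1"
    and "xtSR > 0" and "xrSR > 0" and "xtRD > 0" and "xrRD > 0"
    and "p_coef xtSR ptSR xrSR prSR - eps * q_coef xtSR ptSR xrSR prSR > 0"
    and "p_coef xtRD ptRD xrRD prRD - eps * q_coef xtRD ptRD xrRD prRD > 0"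
    and "lSR > 0" and "lRD > 0" and "t > 0"
    and indep: "prob_space.indep_vars P (\<lambda>_. borel)
                 (\<lambda>i. case i of Inl m \<Rightarrow> XSR m | Inr m \<Rightarrow> XRD m) ({1..M} <+> {1..M})"
    and dSR: "\<And>m. m \<in> {1..M} \<Longrightarrow> distributed P lborel (XSR m) (exponential_density lSR)"
    and dRD: "\<And>m. m \<in> {1..M} \<Longrightarrow> distributed P lborel (XRD m) (exponential_density lRD)"
  shows
   "(let pSR = p_coef xtSR ptSR xrSR prSR; qSR = q_coef xtSR ptSR xrSR prSR;
         pRD = p_coef xtRD ptRD xrRD prRD; qRD = q_coef xtRD ptRD xrRD prRD;
         CSR = (\<lambda>m w. cap_inf alpha pSR qSR t (XSR m w));
         CRD = (\<lambda>m w. cap_inf alpha pRD qRD t (XRD m w));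
         H3 = eps * t * (pSR + qSR) / (pSR - eps * qSR);
         H4 = eps * t * (pRD + qRD) / (pRD - eps * qRD)
     in measure P {w \<in> space P. min (CSR (sel CSR M w) w) (CRD (sel CSR M w) w) < Rth}
        = 1 - (1 - (1 - exp (- lSR * H3)) ^ M) * exp (- lRD * H4))"
proof -
  interpret prob_space P by fact
  define pSR where "pSR = p_coef xtSR ptSR xrSR prSR"
  define qSR where "qSR = q_coef xtSR ptSR xrSR prSR"
  define pRD where "pRD = p_coef xtRD ptRD xrRD prRD"
  define qRD where "qRD = q_coef xtRD ptRD xrRD prRD"
  define H3 where "H3 = eps * t * (pSR + qSR) / (pSR - eps * qSR)"
  define H4 where "H4 = eps * t * (pRD + qRD) / (pRD - eps * qRD)"
  have thrSR: "cap_inf alpha pSR qSR t x < Rth \<longleftrightarrow> x < H3" if "0 \<le> x" for x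
    unfolding H3_def using assms(4-6,11,15) that
    by (intro cap_inf_less_iff) (auto simp: pSR_def qSR_def q_coef_def)
  have thrRD: "cap_inf alpha pRD qRD t x < Rth \<longleftrightarrow> x < H4" if "0 \<le> x" for x
    unfolding H4_def using assms(4-6,12,15) that
    by (intro cap_inf_less_iff) (auto simp: pRD_def qRD_def q_coef_def)
  have "0 \<le> H3" "0 \<le> H4"
    using thrSR[of 0] thrRD[of 0] \<open>Rth > 0\<close> by (simp_all add: cap_inf_def)
  show ?thesis
    unfolding Let_def pSR_def[symmetric] qSR_def[symmetric] pRD_def[symmetric] qRD_def[symmetric]
      H3_def[symmetric] H4_def[symmetric]
    by (rule selection_outage_prob[OF indep \<open>M \<ge> 1\<close> dSR dRD \<open>lSR > 0\<close> \<open>lRD > 0\<close>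
          \<open>0 \<le> H3\<close> \<open>0 \<le> H4\<close> borel_measurable_cap_inf borel_measurable_cap_inf thrSR thrRD])
qed

end
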